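(* For every epistemic transition system, every history $h$ of it, every coalition $C$ and every formula $\phi\in\Phi$: if $h\Vdash\mathsf{H}_C\phi$, then $h\Vdash\mathsf{K}_C\mathsf{H}_C\phi$.
   Context: Fix a set of agents $\mathcal{A}$; a coalition is a subset of $\mathcal{A}$. Language $\Phi$: $\phi ::= p \mid \neg\phi \mid \phi\to\phi \mid \mathsf{K}_C\phi \mid \mathsf{H}_C\phi$ ($C\subseteq\mathcal{A}$). An epistemic transition system is a tuple $(W,\{\sim_a\}_{a\in\mathcal{A}},V,M,\pi)$ with $W$ a set of states, each $\sim_a$ an equivalence relation on $W$, $V$ a nonempty set, $M\subseteq W\times V^{\mathcal{A}}\times W$, $\pi$ mapping propositional variables to subsets of $W$. For profiles $\mathbf{s}_1\in V^{C_1},\mathbf{s}_2\in V^{C_2}$ and $C\subseteq C_1\cap C_2$, $\mathbf{s}_1=_C\mathbf{s}_2$ means $(\mathbf{s}_1)_a=(\mathbf{s}_2)_a$ for all $a\in C$. A history is a sequence $(w_0,\mathbf{s}_1,w_1,\dots,\mathbf{s}_n,w_n)$, $n\ge0$, with $w_i\in W$, $\mathbf{s}_i\in V^{\mathcal{A}}$, $(w_i,\mathbf{s}_{i+1},w_{i+1})\in M$; $hd(h)$ is its last element, and $h::\mathbf{s}::w$ denotes extension. $h\approx_a h'$ iff the histories have the same length $n$, their $i$-th states are $\sim_a$-related for all $i$, and their $i$-th profiles agree at $a$ for all $i$; $h\approx_C h'$ iff $h\approx_a h'$ for all $a\in C$. Satisfaction: $h\Vdash p$ iff $hd(h)\in\pi(p)$;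 Boolean clauses standard; $h\Vdash\mathsf{K}_C\phi$ iff $h'\Vdash\phi$ for all histories $h'$ with $h\approx_C h'$; $h\Vdash\mathsf{H}_C\phi$ iff there is $\mathbf{s}\in V^C$ such that for every history $h'::\mathbf{s}'::w'$ with $h\approx_C h'$ and $\mathbf{s}=_C\mathbf{s}'$, $h'::\mathbf{s}'::w'\Vdash\phi$. *)

theory Defs
  imports Main
begin

text \<open>Agents are the elements of the type 'a (the fixed agent set is UNIV);
  coalitions are sets of agents.  Propositional variables have type 'p.\<close>

datatype ('p, 'a) form =
    Prop 'p
  | Neg "('p, 'a) form"
  | Imp "('p, 'a) form" "('p, 'a) form"
  | Kn "'a set" "('p, 'a) form"
  | Hn "'a set" "('p, 'a) form"

record ('w, 'a, 'v, 'p) ets =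
  W :: "'w set"
  sim :: "'a \<Rightarrow> ('w \<times> 'w) set"
  Val :: "'v set"
  Mech :: "('w \<times> ('a \<Rightarrow> 'v) \<times> 'w) set"
  pi :: "'p \<Rightarrow> 'w set"

definition is_ets :: "('w, 'a, 'v, 'p) ets \<Rightarrow> bool" where
  "is_ets E \<longleftrightarrow>
     (\<forall>a. equiv (W E) (sim E a)) \<and> Val E \<noteq> {} \<and>
     Mech E \<subseteq> {(w, s, w'). w \<in> W E \<and> (\<forall>a. s a \<in> Val E) \<and> w' \<in> W E} \<and>
     (\<forall>p. pi E p \<subseteq> W E)"

text \<open>A history (w0, s1, w1, ..., sn, wn) is represented as the pair
  (w0, [(s1,w1), ..., (sn,wn)]).\<close>
type_synonym ('w, 'a, 'v) history = "'w \<times> (('a \<Rightarrow> 'v) \<times> 'w) list"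

definition hlen :: "('w, 'a, 'v) history \<Rightarrow> nat" where
  "hlen h = length (snd h)"

text \<open>i-th state (0 \<le> i \<le> n) and i-th profile (1 \<le> i \<le> n).\<close>
definition hstate :: "('w, 'a, 'v) history \<Rightarrow> nat \<Rightarrow> 'w" where
  "hstate h i = (if i = 0 then fst h else snd (snd h ! (i - 1)))"

definition hprof :: "('w, 'a, 'v) history \<Rightarrow> nat \<Rightarrow> ('a \<Rightarrow> 'v)" where
  "hprof h i = fst (snd h ! (i - 1))"

definition hd_h :: "('w, 'a, 'v) history \<Rightarrow> 'w" where
  "hd_h h = hstate h (hlen h)"

definition extend :: "('w, 'a, 'v) history \<Rightarrow> ('a \<Rightarrow> 'v) \<Rightarrow> 'w \<Rightarrow> ('w, 'a, 'v) history" where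
  "extend h s w = (fst h, snd h @ [(s, w)])"

definition is_history :: "('w, 'a, 'v, 'p) ets \<Rightarrow> ('w, 'a, 'v) history \<Rightarrow> bool" where
  "is_history E h \<longleftrightarrow> hstate h 0 \<in> W E \<and>
     (\<forall>i. 1 \<le> i \<and> i \<le> hlen h \<longrightarrow>
        (\<forall>a. hprof h i a \<in> Val E) \<and>
        (hstate h (i - 1), hprof h i, hstate h i) \<in> Mech E)"

definition indist :: "('w, 'a, 'v, 'p) ets \<Rightarrow> 'a \<Rightarrow> ('w, 'a, 'v) history \<Rightarrow> ('w, 'a, 'v) history \<Rightarrow> bool" where
  "indist E a h h' \<longleftrightarrow> hlen h = hlen h' \<and>
     (\<forall>i \<le> hlen h. (hstate h i, hstate h' i) \<in> sim E a) \<and>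
     (\<forall>i. 1 \<le> i \<and> i \<le> hlen h \<longrightarrow> hprof h i a = hprof h' i a)"

definition indistC :: "('w, 'a, 'v, 'p) ets \<Rightarrow> 'a set \<Rightarrow> ('w, 'a, 'v) history \<Rightarrow> ('w, 'a, 'v) history \<Rightarrow> bool" where
  "indistC E C h h' \<longleftrightarrow> (\<forall>a \<in> C. indist E a h h')"

text \<open>A profile of coalition C (element of V^C) is represented by a function
  'a \<Rightarrow> 'v whose values on C lie in V; values outside C are irrelevant.\<close>
primrec sat :: "('w, 'a, 'v, 'p) ets \<Rightarrow> ('w, 'a, 'v) history \<Rightarrow> ('p, 'a) form \<Rightarrow> bool" where
  "sat E h (Prop p) = (hd_h h \<in> pi E p)"
| "sat E h (Neg \<phi>) = (\<not> sat E h \<phi>)"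
| "sat E h (Imp \<phi> \<psi>) = (sat E h \<phi> \<longrightarrow> sat E h \<psi>)"
| "sat E h (Kn C \<phi>) = (\<forall>h'. is_history E h' \<and> indistC E C h h' \<longrightarrow> sat E h' \<phi>)"
| "sat E h (Hn C \<phi>) = (\<exists>s. (\<forall>a \<in> C. s a \<in> Val E) \<and>
     (\<forall>h' s' w'. is_history E (extend h' s' w') \<and> indistC E C h h' \<and> (\<forall>a \<in> C. s a = s' a)
        \<longrightarrow> sat E (extend h' s' w') \<phi>))"

end

theory Submission
  imports Defs
begin

text \<open>Indistinguishability for C is transitive, so every history C-indistinguishable
  from h' is already C-indistinguishable from h: the strategy witnessing
  \<open>Hn C \<phi>\<close> at h also witnesses it at h'.\<close>

lemma indist_trans:
  assumes "is_ets E" "indist E a h h'" "indist E a h' h''"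
  shows "indist E a h h''"
proof -
  have "trans (sim E a)"
    using assms(1) unfolding is_ets_def equiv_def by blast
  with assms(2,3) show ?thesis
    unfolding indist_def by (metis transD)
qed

lemma indistC_trans:
  assumes "is_ets E" "indistC E C h h'" "indistC E C h' h''"
  shows "indistC E C h h''"
  using assms(2,3) indist_trans[OF assms(1)] unfolding indistC_def by blast

lemma sat_Hn_indistC:
  assumes "is_ets E" "sat E h (Hn C \<phi>)" "indistC E C h h'"
  shows "sat E h' (Hn C \<phi>)"
proof -
  obtain s where "\<forall>a \<in> C. s a \<in> Val E"
    "\<forall>h'' s' w'. is_history E (extend h'' s' w') \<and> indistC E C h h'' \<and> (\<forall>a \<in> C. s a = s' a)
       \<longrightarrow> sat E (extend h'' s' w') \<phi>"
    using assms(2) by auto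
  then show ?thesis
    using indistC_trans[OF assms(1) assms(3)] by auto
qed

theorem lemma10:
  fixes E :: "('w, 'a, 'v, 'p) ets" and h :: "('w, 'a, 'v) history"
    and C :: "'a set" and \<phi> :: "('p, 'a) form"
  assumes "is_ets E" and "is_history E h" and "sat E h (Hn C \<phi>)"
  shows "sat E h (Kn C (Hn C \<phi>))"
  using sat_Hn_indistC[OF assms(1) assms(3)] by simp

end
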